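(* Let $h:\mathbb{R}\to\mathbb{R}$ be a smooth function with $h(T)=\pi/2$ for $T\le 0$, $0<h(T)<\pi/2$ for $0<T<1$, and $h(T)=0$ for $T\ge 1$. For $0<x<1$ let $g(x)=\tan\bigl(h(x)\bigr)$, and for $0\le x<1$ let $B(x)=\exp\left(\int_0^x \cot\bigl(h(z)\bigr)\,dz\right)$. Assume $g'''(x)<0$ for all $0<x<1$. Define, for $0<x<1$, $$\mathcal{C}(x)=\frac{1}{B(x)}\int_0^{x}\cos(x-z)\,B'(z)\,\frac{g(x)-g(z)}{x-z}\,dz .$$ Then $\lim_{x\to 1_-}\mathcal{C}(x)=0$.
   Context: The quotient $\frac{g(x)-g(z)}{x-z}$ is understood as $g'(x)$ at $z=x$. (In the paper the variable $x$ appears as $y+A$.) *)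

theory Defs
  imports "HOL-Analysis.Analysis"
begin

definition smooth_real :: "(real \<Rightarrow> real) \<Rightarrow> bool" where
  "smooth_real f \<longleftrightarrow> (\<forall>n x. ((deriv ^^ n) f) differentiable (at x))"

end

(*
  On (0,1) we have B' = B cot h = B / g. Since h has a minimum at 1, h'(1) = 0, so
  g' = h' / cos^2 h vanishes at 1 and g is eps-Lipschitz on some [a,1]. With eps = 1 this
  gives g t <= 1 - t, hence cot h >= 1 / (1 - t) is not integrable up to 1 and B x -> oo.
  Split the integral in C(x) B(x) at a: on [a,x] the difference quotient of g is at most
  eps, contributing at most eps B(x); on (0,a] the identity B' g = B keeps the integrand
  bounded uniformly for x near 1. Thus |C x| <= M / B x + eps.
*)
theory Submission
  imports Defs "HOL-Real_Asymp.Real_Asymp"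
begin

lemma tendsto_divide_zero_if_abs_le_const_plus_eps:
  fixes I B :: "'a \<Rightarrow> real"
  assumes B: "filterlim B at_top F"
    and bound: "\<And>\<epsilon>. 0 < \<epsilon> \<Longrightarrow> \<exists>M. eventually (\<lambda>x. \<bar>I x\<bar> \<le> M + \<epsilon> * B x) F"
  shows "((\<lambda>x. I x / B x) \<longlongrightarrow> 0) F"
proof (rule tendstoI)
  fix e :: real
  assume "0 < e"
  then obtain M where M: "eventually (\<lambda>x. \<bar>I x\<bar> \<le> M + e / 2 * B x) F"
    using bound[of "e / 2"] by auto
  have "eventually (\<lambda>x. 2 * \<bar>M\<bar> / e + 1 \<le> B x) F"
    using B by (simp add: filterlim_at_top)
  then show "eventually (\<lambda>x. dist (I x / B x) 0 < e) F"
    using M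
  proof eventually_elim
    case (elim x)
    have "0 < B x"
      using elim(1) \<open>0 < e\<close> by (smt (verit) zero_le_divide_iff abs_ge_zero)
    have "2 * \<bar>M\<bar> < e * B x"
      using elim(1) \<open>0 < e\<close> by (simp add: field_simps)
    then have "\<bar>I x\<bar> < e * B x"
      using elim(2) by linarith
    then show ?case
      using \<open>0 < B x\<close> by (simp add: pos_divide_less_eq)
  qed
qed

lemma filterlim_at_top_at_left_if_deriv_ge:
  fixes F F' :: "real \<Rightarrow> real"
  assumes "a < b" and "0 < c"
    and deriv: "\<And>t. a \<le> t \<Longrightarrow> t < b \<Longrightarrow> (F has_real_derivative F' t) (at t)"
    and ge: "\<And>t. a \<le> t \<Longrightarrow> t < b \<Longrightarrow> c / (b - t) \<le> F' t"
  shows "filterlim F at_top (at_left b)"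
proof -
  have F_plus_log_mono: "F a + c * ln (b - a) \<le> F x + c * ln (b - x)" if "a \<le> x" "x < b" for x
  proof (rule DERIV_nonneg_imp_nondecreasing[OF \<open>a \<le> x\<close>])
    fix t
    assume t: "a \<le> t" "t \<le> x"
    have "((\<lambda>t. F t + c * ln (b - t)) has_real_derivative F' t - c / (b - t)) (at t)"
      using deriv[of t] t \<open>x < b\<close> by (auto intro!: derivative_eq_intros simp: field_simps)
    moreover have "0 \<le> F' t - c / (b - t)"
      using ge[of t] t \<open>x < b\<close> by simp
    ultimately show "\<exists>y. ((\<lambda>t. F t + c * ln (b - t)) has_real_derivative y) (at t) \<and> 0 \<le> y"
      by blast
  qed
  have "eventually (\<lambda>x. F a + c * ln (b - a) - c * ln (b - x) \<le> F x) (at_left b)"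
    using eventually_at_left_real[OF \<open>a < b\<close>]
  proof eventually_elim
    case (elim x)
    with F_plus_log_mono[of x] show ?case by simp
  qed
  moreover have "filterlim (\<lambda>x. F a + c * ln (b - a) - c * ln (b - x)) at_top (at_left b)"
    using \<open>0 < c\<close> by real_asymp
  ultimately show ?thesis
    by (rule filterlim_at_top_mono[rotated])
qed

lemma abs_integral_le_const_plus_integral:
  fixes k w :: "real \<Rightarrow> real"
  assumes "a \<le> b"
    and k_cont: "continuous_on {a<..<b} k"
    and w: "(w has_integral W) {a..b}"
    and k_le: "\<And>z. z \<in> {a<..<b} \<Longrightarrow> \<bar>k z\<bar> \<le> M + w z"
  shows "\<bar>integral {a..b} k\<bar> \<le> (b - a) * M + W"
proof -
  have "((\<lambda>z. M + w z) has_integral (b - a) * M + W) {a..b}"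
    using has_integral_add[OF has_integral_const_real[of M a b] w] \<open>a \<le> b\<close>
    by (simp add: mult.commute)
  then have "((\<lambda>z. M + w z) has_integral (b - a) * M + W) {a<..<b}"
    by (simp add: has_integral_Icc_iff_Ioo)
  moreover have "k \<in> borel_measurable (lebesgue_on {a<..<b})"
    using k_cont by (rule continuous_imp_measurable_on_sets_lebesgue) simp
  ultimately have "norm (integral {a<..<b} k) \<le> (b - a) * M + W"
    using k_le by (intro integral_norm_bound_integral') auto
  then show ?thesis
    by (simp add: integral_open_interval_real)
qed

lemma smooth_real_has_real_derivative:
  "smooth_real f \<Longrightarrow> (f has_real_derivative deriv f x) (at x)"
  unfolding smooth_real_def DERIV_deriv_iff_real_differentiable
  by (metis funpow_0)

lemma smooth_real_isCont_deriv: "smooth_real f \<Longrightarrow> isCont (deriv f) x"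
  unfolding smooth_real_def
  by (metis One_nat_def funpow.simps(2) funpow_0 o_apply differentiable_imp_continuous_within)

locale angle_transition =
  fixes h :: "real \<Rightarrow> real"
  assumes h_has_deriv: "\<And>x. (h has_real_derivative deriv h x) (at x)"
    and isCont_deriv_h: "\<And>x. isCont (deriv h) x"
    and h_nonpos: "\<And>T. T \<le> 0 \<Longrightarrow> h T = pi / 2"
    and h_between: "\<And>T. 0 < T \<Longrightarrow> T < 1 \<Longrightarrow> 0 < h T \<and> h T < pi / 2"
    and h_ge_1: "\<And>T. 1 \<le> T \<Longrightarrow> h T = 0"
begin

definition g :: "real \<Rightarrow> real" where
  "g = (\<lambda>x. tan (h x))"

definition B :: "real \<Rightarrow> real" where
  "B = (\<lambda>x. exp (integral {0..x} (\<lambda>z. cot (h z))))"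

definition C_integrand :: "real \<Rightarrow> real \<Rightarrow> real" where
  "C_integrand x z = cos (x - z) * deriv B z * (if z = x then deriv g x else (g x - g z) / (x - z))"

lemma isCont_h: "isCont h x"
  using h_has_deriv by (rule DERIV_isCont)

lemma h_nonneg_less_pi_half: "0 < t \<Longrightarrow> 0 \<le> h t \<and> h t < pi / 2"
  using h_between[of t] h_ge_1[of t] by (cases "t < 1") auto

lemma cos_h_pos: "0 < t \<Longrightarrow> 0 < cos (h t)"
  using h_nonneg_less_pi_half[of t] by (auto intro: cos_gt_zero_pi)

lemma sin_h_pos: "t < 1 \<Longrightarrow> 0 < sin (h t)"
  using h_between[of t] by (cases "0 < t") (auto intro: sin_gt_zero simp: h_nonpos)

lemma deriv_h_1: "deriv h 1 = 0"
proof (rule DERIV_local_min[OF h_has_deriv zero_less_one])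
  show "\<forall>y. \<bar>1 - y\<bar> < 1 \<longrightarrow> h 1 \<le> h y"
    using h_nonneg_less_pi_half h_ge_1[of 1] by auto
qed

lemma g_has_deriv: "0 < t \<Longrightarrow> (g has_real_derivative deriv h t / (cos (h t))\<^sup>2) (at t)"
  unfolding g_def using cos_h_pos[of t]
  by (auto intro!: derivative_eq_intros h_has_deriv simp: field_simps power2_eq_square)

lemma isCont_g: "0 < t \<Longrightarrow> isCont g t"
  using g_has_deriv by (rule DERIV_isCont)

lemma g_1: "g 1 = 0"
  by (simp add: g_def h_ge_1)

lemma g_pos: "0 < t \<Longrightarrow> t < 1 \<Longrightarrow> 0 < g t"
  unfolding g_def using h_between by (intro tan_gt_zero) auto

lemma cot_h_mult_g: "0 < t \<Longrightarrow> t < 1 \<Longrightarrow> cot (h t) * g t = 1"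
  using cos_h_pos[of t] sin_h_pos[of t] by (simp add: g_def cot_def tan_def)

lemma isCont_cot_h: "t < 1 \<Longrightarrow> isCont (\<lambda>t. cot (h t)) t"
  using sin_h_pos[of t] isCont_h[of t] by (auto intro!: continuous_intros simp: cot_def)

lemma g_lipschitz_near_1:
  assumes "0 < \<epsilon>"
  obtains a where "0 < a" "a < 1" "\<And>x z. a \<le> z \<Longrightarrow> z \<le> x \<Longrightarrow> x \<le> 1 \<Longrightarrow> \<bar>g x - g z\<bar> \<le> \<epsilon> * (x - z)"
proof -
  define g' where "g' t = deriv h t / (cos (h t))\<^sup>2" for t
  have "isCont g' 1"
    unfolding g'_def using isCont_deriv_h isCont_h cos_h_pos[of 1]
    by (auto intro!: continuous_intros)
  moreover have "g' 1 = 0"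
    by (simp add: g'_def deriv_h_1)
  ultimately have "(g' \<longlongrightarrow> 0) (nhds 1)"
    by (metis isCont_def tendsto_at_iff_tendsto_nhds)
  then have "eventually (\<lambda>t. \<bar>g' t\<bar> < \<epsilon>) (nhds 1)"
    using \<open>0 < \<epsilon>\<close> by (auto simp: tendsto_iff dist_real_def)
  then obtain d where "0 < d" and d: "\<And>t. dist t 1 \<le> d \<Longrightarrow> \<bar>g' t\<bar> < \<epsilon>"
    unfolding eventually_nhds_metric_le by blast
  define a where "a = max (1 / 2) (1 - d)"
  have "0 < a" "a < 1"
    using \<open>0 < d\<close> by (auto simp: a_def)
  moreover have "\<bar>g x - g z\<bar> \<le> \<epsilon> * (x - z)" if "a \<le> z" "z \<le> x" "x \<le> 1" for x z
  proof -
    have "norm (g x - g z) \<le> \<epsilon> * norm (x - z)"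
    proof (rule field_differentiable_bound[of "{a..1}"])
      fix t
      assume "t \<in> {a..1}"
      then have "0 < t" "dist t 1 \<le> d"
        using \<open>0 < a\<close> by (auto simp: a_def dist_real_def)
      then show "(g has_field_derivative g' t) (at t within {a..1})"
        and "norm (g' t) \<le> \<epsilon>"
        using g_has_deriv[of t] d[of t] by (auto simp: g'_def intro: has_field_derivative_at_within)
    qed (use that in auto)
    then show ?thesis
      using that by simp
  qed
  ultimately show ?thesis
    using that by blast
qed

lemma g_le_1_minus:
  obtains a where "0 < a" "a < 1" "\<And>t. a \<le> t \<Longrightarrow> t < 1 \<Longrightarrow> g t \<le> 1 - t"
proof -
  obtain a where "0 < a" "a < 1" and lip: "\<And>x z. a \<le> z \<Longrightarrow> z \<le> x \<Longrightarrow> x \<le> 1 \<Longrightarrow> \<bar>g x - g z\<bar> \<le> x - z"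
    using g_lipschitz_near_1[of 1] by auto
  show ?thesis
  proof (rule that[OF \<open>0 < a\<close> \<open>a < 1\<close>])
    fix t
    assume "a \<le> t" "t < 1"
    then show "g t \<le> 1 - t"
      using lip[of t 1] g_1 by simp
  qed
qed

lemma continuous_on_cot_h: "x < 1 \<Longrightarrow> continuous_on {0..x} (\<lambda>t. cot (h t))"
  using isCont_cot_h by (intro continuous_at_imp_continuous_on) auto

lemma integral_cot_h_has_deriv:
  assumes "0 < z" "z < 1"
  shows "((\<lambda>x. integral {0..x} (\<lambda>t. cot (h t))) has_real_derivative cot (h z)) (at z)"
proof -
  have "((\<lambda>x. integral {0..x} (\<lambda>t. cot (h t))) has_real_derivative cot (h z)) (at z within {0..(1 + z) / 2})"
    using assms by (intro integral_has_real_derivative continuous_on_cot_h) auto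
  moreover have "at z within {0..(1 + z) / 2} = at z"
    using assms by (intro at_within_Icc_at) auto
  ultimately show ?thesis
    by simp
qed

lemma B_has_deriv: "0 < z \<Longrightarrow> z < 1 \<Longrightarrow> (B has_real_derivative B z * cot (h z)) (at z)"
  unfolding B_def by (auto intro!: derivative_eq_intros integral_cot_h_has_deriv)

lemma deriv_B: "0 < z \<Longrightarrow> z < 1 \<Longrightarrow> deriv B z = B z * cot (h z)"
  using B_has_deriv by (rule DERIV_imp_deriv)

lemma B_pos: "0 < B x"
  by (simp add: B_def)

lemma deriv_B_nonneg: "0 < z \<Longrightarrow> z < 1 \<Longrightarrow> 0 \<le> deriv B z"
  using cos_h_pos[of z] sin_h_pos[of z] B_pos[of z] by (simp add: deriv_B cot_def)

lemma deriv_B_mult_g: "0 < z \<Longrightarrow> z < 1 \<Longrightarrow> deriv B z * g z = B z"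
  using cot_h_mult_g by (simp add: deriv_B)

lemma continuous_on_B: "x < 1 \<Longrightarrow> continuous_on {0..x} B"
  unfolding B_def
  by (intro continuous_intros indefinite_integral_continuous_1 integrable_continuous_interval
      continuous_on_cot_h)

lemma filterlim_B_at_top: "filterlim B at_top (at_left 1)"
proof -
  obtain a where "0 < a" "a < 1" and g_le: "\<And>t. a \<le> t \<Longrightarrow> t < 1 \<Longrightarrow> g t \<le> 1 - t"
    by (rule g_le_1_minus) auto
  have "1 / (1 - t) \<le> cot (h t)" if "a \<le> t" "t < 1" for t
  proof -
    have "0 < g t"
      using g_pos that \<open>0 < a\<close> by simp
    then have "1 / (1 - t) \<le> 1 / g t"
      using g_le[OF that] by (intro divide_left_mono) auto
    also have "\<dots> = cot (h t)"
      using cot_h_mult_g[of t] that \<open>0 < a\<close> \<open>0 < g t\<close> by (simp add: field_simps)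
    finally show ?thesis .
  qed
  then have "filterlim (\<lambda>x. integral {0..x} (\<lambda>t. cot (h t))) at_top (at_left 1)"
    using \<open>0 < a\<close> \<open>a < 1\<close>
    by (intro filterlim_at_top_at_left_if_deriv_ge[where c = 1 and F' = "\<lambda>t. cot (h t)"]
        integral_cot_h_has_deriv) auto
  then show ?thesis
    unfolding B_def by (rule filterlim_compose[OF exp_at_top])
qed

lemma deriv_B_has_integral: "0 \<le> x \<Longrightarrow> x < 1 \<Longrightarrow> (deriv B has_integral B x - B 0) {0..x}"
  using continuous_on_B B_has_deriv
  by (intro fundamental_theorem_of_calculus_interior)
     (auto simp: has_real_derivative_iff_has_vector_derivative [symmetric] deriv_B)

lemma C_integrand_eq:
  "0 < z \<Longrightarrow> z < x \<Longrightarrow> x < 1 \<Longrightarrow> C_integrand x z = cos (x - z) * deriv B z * ((g x - g z) / (x - z))"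
  by (simp add: C_integrand_def)

lemma continuous_on_C_integrand:
  assumes "x < 1"
  shows "continuous_on {0<..<x} (C_integrand x)"
proof -
  have "continuous_on {0<..<x} (\<lambda>z. cos (x - z) * (B z * cot (h z)) * ((g x - g z) / (x - z)))"
  proof (intro continuous_at_imp_continuous_on ballI)
    fix z
    assume z: "z \<in> {0<..<x}"
    then have "0 < z" "z < 1"
      using \<open>x < 1\<close> by auto
    then have "isCont g z" "isCont B z"
      using isCont_g B_has_deriv by (auto intro: DERIV_isCont)
    then show "isCont (\<lambda>z. cos (x - z) * (B z * cot (h z)) * ((g x - g z) / (x - z))) z"
      using z isCont_h sin_h_pos[of z] \<open>z < 1\<close> by (intro continuous_intros) auto
  qed
  then show ?thesis
    by (rule continuous_on_eq) (use \<open>x < 1\<close> in \<open>auto simp: C_integrand_eq deriv_B\<close>)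
qed

lemma abs_C_integrand_le_near_diagonal:
  assumes lip: "\<And>x z. a \<le> z \<Longrightarrow> z \<le> x \<Longrightarrow> x \<le> 1 \<Longrightarrow> \<bar>g x - g z\<bar> \<le> \<epsilon> * (x - z)"
    and "0 < a" "a \<le> z" "z < x" "x < 1"
  shows "\<bar>C_integrand x z\<bar> \<le> \<epsilon> * deriv B z"
proof -
  have quotient_le: "\<bar>(g x - g z) / (x - z)\<bar> \<le> \<epsilon>"
    using lip[of z x] assms by (simp add: abs_divide pos_divide_le_eq)
  have "0 \<le> deriv B z"
    using assms by (intro deriv_B_nonneg) auto
  have "\<bar>C_integrand x z\<bar> = \<bar>cos (x - z)\<bar> * (deriv B z * \<bar>(g x - g z) / (x - z)\<bar>)"
    using assms \<open>0 \<le> deriv B z\<close> by (simp add: C_integrand_eq abs_mult)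
  also have "\<dots> \<le> 1 * (deriv B z * \<epsilon>)"
    using quotient_le \<open>0 \<le> deriv B z\<close> by (intro mult_mono mult_left_mono) auto
  finally show ?thesis
    by (simp add: mult.commute)
qed

lemma C_integrand_bounded_off_diagonal:
  assumes "0 < a" "a < b" "b < 1"
  obtains M where "0 \<le> M" "\<And>x z. 0 < z \<Longrightarrow> z \<le> a \<Longrightarrow> b \<le> x \<Longrightarrow> x < 1 \<Longrightarrow> \<bar>C_integrand x z\<bar> \<le> M"
proof -
  have B_cont: "continuous_on {0..a} B"
    using assms by (intro continuous_on_B) auto
  have deriv_B_cont: "continuous_on {0..a} (\<lambda>z. B z * cot (h z))"
    using assms B_cont by (intro continuous_on_mult continuous_on_cot_h) auto
  obtain M\<^sub>1 where "0 \<le> M\<^sub>1" and M\<^sub>1: "\<And>z. z \<in> {0..a} \<Longrightarrow> \<bar>B z * cot (h z)\<bar> \<le> M\<^sub>1"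
    using continuous_on_compact_bound[OF compact_Icc deriv_B_cont, unfolded real_norm_def] by blast
  obtain M\<^sub>2 where "0 \<le> M\<^sub>2" and M\<^sub>2: "\<And>z. z \<in> {0..a} \<Longrightarrow> \<bar>B z\<bar> \<le> M\<^sub>2"
    using continuous_on_compact_bound[OF compact_Icc B_cont, unfolded real_norm_def] by blast
  have g_cont: "continuous_on {b..1} g"
    using assms by (intro continuous_at_imp_continuous_on ballI isCont_g) auto
  obtain M\<^sub>3 where "0 \<le> M\<^sub>3" and M\<^sub>3: "\<And>x. x \<in> {b..1} \<Longrightarrow> \<bar>g x\<bar> \<le> M\<^sub>3"
    using continuous_on_compact_bound[OF compact_Icc g_cont, unfolded real_norm_def] by blast
  define M where "M = (M\<^sub>1 * M\<^sub>3 + M\<^sub>2) / (b - a)"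
  have "\<bar>C_integrand x z\<bar> \<le> M" if z: "0 < z" "z \<le> a" and x: "b \<le> x" "x < 1" for x z
  proof -
    have "z < x" "z < 1" "z \<in> {0..a}" "x \<in> {b..1}"
      using z x assms by auto
    have "\<bar>C_integrand x z\<bar> = \<bar>cos (x - z)\<bar> * \<bar>deriv B z * (g x - g z)\<bar> / (x - z)"
      using z \<open>z < x\<close> \<open>x < 1\<close> by (simp add: C_integrand_eq abs_mult abs_divide)
    also have "\<dots> \<le> \<bar>deriv B z * (g x - g z)\<bar> / (x - z)"
      using \<open>z < x\<close> by (intro divide_right_mono mult_left_le_one_le) auto
    \<comment> \<open>g z is unbounded as z tends to 0; the identity B' g = B removes it.\<close>
    also have "deriv B z * (g x - g z) = B z * cot (h z) * g x - B z"
      using deriv_B_mult_g[of z] deriv_B[of z] z \<open>z < 1\<close> by (simp add: right_diff_distrib)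
    also have "\<bar>B z * cot (h z) * g x - B z\<bar> \<le> M\<^sub>1 * M\<^sub>3 + M\<^sub>2"
    proof -
      have "\<bar>B z * cot (h z) * g x\<bar> \<le> M\<^sub>1 * M\<^sub>3"
        unfolding abs_mult[of "B z * cot (h z)"]
        using M\<^sub>1[OF \<open>z \<in> {0..a}\<close>] M\<^sub>3[OF \<open>x \<in> {b..1}\<close>] \<open>0 \<le> M\<^sub>1\<close> by (intro mult_mono) auto
      then show ?thesis
        using M\<^sub>2[OF \<open>z \<in> {0..a}\<close>] abs_triangle_ineq4[of "B z * cot (h z) * g x" "B z"] by linarith
    qed
    then have "\<bar>B z * cot (h z) * g x - B z\<bar> / (x - z) \<le> M"
      unfolding M_def using \<open>0 \<le> M\<^sub>1\<close> \<open>0 \<le> M\<^sub>2\<close> \<open>0 \<le> M\<^sub>3\<close> z x assms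
      by (intro frac_le) auto
    finally show ?thesis .
  qed
  moreover have "0 \<le> M"
    unfolding M_def using \<open>0 \<le> M\<^sub>1\<close> \<open>0 \<le> M\<^sub>2\<close> \<open>0 \<le> M\<^sub>3\<close> assms by simp
  ultimately show ?thesis
    using that by blast
qed

lemma abs_integral_C_integrand_le:
  assumes "0 < \<epsilon>"
  shows "\<exists>M. eventually (\<lambda>x. \<bar>integral {0..x} (C_integrand x)\<bar> \<le> M + \<epsilon> * B x) (at_left 1)"
proof -
  obtain a where "0 < a" "a < 1"
    and lip: "\<And>x z. a \<le> z \<Longrightarrow> z \<le> x \<Longrightarrow> x \<le> 1 \<Longrightarrow> \<bar>g x - g z\<bar> \<le> \<epsilon> * (x - z)"
    using g_lipschitz_near_1[OF assms] by blast
  define b where "b = (1 + a) / 2"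
  have "a < b" "b < 1"
    using \<open>a < 1\<close> by (auto simp: b_def)
  then obtain M where "0 \<le> M"
    and far: "\<And>x z. 0 < z \<Longrightarrow> z \<le> a \<Longrightarrow> b \<le> x \<Longrightarrow> x < 1 \<Longrightarrow> \<bar>C_integrand x z\<bar> \<le> M"
    using C_integrand_bounded_off_diagonal \<open>0 < a\<close> by blast
  have "\<bar>integral {0..x} (C_integrand x)\<bar> \<le> M + \<epsilon> * B x" if x: "b < x" "x < 1" for x
  proof -
    have "\<bar>C_integrand x z\<bar> \<le> M + \<epsilon> * deriv B z" if z: "z \<in> {0<..<x}" for z
    proof (cases "z \<le> a")
      case True
      have "0 \<le> \<epsilon> * deriv B z"
        using z x \<open>0 < \<epsilon>\<close> deriv_B_nonneg[of z] by simp
      then show ?thesis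
        using far[of z x] True z x by simp
    next
      case False
      then show ?thesis
        using abs_C_integrand_le_near_diagonal[OF lip \<open>0 < a\<close>, of z x] z x \<open>0 \<le> M\<close> by auto
    qed
    moreover have "((\<lambda>z. \<epsilon> * deriv B z) has_integral \<epsilon> * (B x - B 0)) {0..x}"
      using deriv_B_has_integral x \<open>a < b\<close> \<open>0 < a\<close> by (intro has_integral_mult_right) auto
    ultimately have "\<bar>integral {0..x} (C_integrand x)\<bar> \<le> (x - 0) * M + \<epsilon> * (B x - B 0)"
      using x \<open>a < b\<close> \<open>0 < a\<close>
      by (intro abs_integral_le_const_plus_integral continuous_on_C_integrand) auto
    also have "\<dots> \<le> M + \<epsilon> * B x"
      using x \<open>0 < a\<close> \<open>a < b\<close> \<open>0 \<le> M\<close> mult_pos_pos[OF \<open>0 < \<epsilon>\<close> B_pos[of 0]]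
        mult_left_le_one_le[of M x]
      by (simp add: right_diff_distrib)
    finally show ?thesis .
  qed
  then have "eventually (\<lambda>x. \<bar>integral {0..x} (C_integrand x)\<bar> \<le> M + \<epsilon> * B x) (at_left 1)"
    using eventually_at_left_real[OF \<open>b < 1\<close>] by (auto elim: eventually_mono)
  then show ?thesis ..
qed

theorem C_tendsto_0: "((\<lambda>x. integral {0..x} (C_integrand x) / B x) \<longlongrightarrow> 0) (at_left 1)"
  using filterlim_B_at_top abs_integral_C_integrand_le
  by (rule tendsto_divide_zero_if_abs_le_const_plus_eps)

end

theorem mainTheorem4:
  fixes h :: "real \<Rightarrow> real"
  assumes smooth: "smooth_real h"
    and h_neg: "\<And>T. T \<le> 0 \<Longrightarrow> h T = pi / 2"
    and h_mid: "\<And>T. 0 < T \<Longrightarrow> T < 1 \<Longrightarrow> 0 < h T \<and> h T < pi / 2"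
    and h_big: "\<And>T. 1 \<le> T \<Longrightarrow> h T = 0"
  defines "g \<equiv> (\<lambda>x. tan (h x))"
    and "B \<equiv> (\<lambda>x. exp (integral {0..x} (\<lambda>z. cot (h z))))"
  assumes g3: "\<And>x. 0 < x \<Longrightarrow> x < 1 \<Longrightarrow> deriv (deriv (deriv g)) x < 0"
  defines "C \<equiv> (\<lambda>x. (1 / B x) * integral {0..x}
              (\<lambda>z. cos (x - z) * deriv B z *
                   (if z = x then deriv g x else (g x - g z) / (x - z))))"
  shows "(C \<longlongrightarrow> 0) (at_left 1)"
proof -
  have profile: "angle_transition h"
    using smooth h_neg h_mid h_big
    by unfold_locales (auto intro: smooth_real_has_real_derivative smooth_real_isCont_deriv)
  have B_eq: "angle_transition.B h = B" and g_eq: "angle_transition.g h = g"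
    by (simp_all add: B_def g_def angle_transition.B_def[OF profile] angle_transition.g_def[OF profile])
  have "C = (\<lambda>x. integral {0..x} (angle_transition.C_integrand h x) / angle_transition.B h x)"
    unfolding C_def angle_transition.C_integrand_def[OF profile, abs_def] B_eq g_eq by simp
  then show ?thesis
    using angle_transition.C_tendsto_0[OF profile] by simp
qed

end
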